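(* Let $\mathbb F$ be a field, $q(x_1,\dots,x_6)=x_1x_2+x_3x_4+x_5x_6$ on $\mathbb F^6$, and let $Q^+(5,\mathbb F)$ be its polar space with line-Grassmannian $Q^+_2(5,\mathbb F)$. Then for every proper subfield $\mathbb F_0$ of $\mathbb F$, the line-Grassmannian $Q^+_2(5,\mathbb F)$ is not $\mathbb F_0$-generated.
   Context: For a subfield $\mathbb F_0$, the same polynomial defines a quadratic form on $\mathbb F_0^6\subseteq\mathbb F^6$ with polar space $Q^+(5,\mathbb F_0)$. Every totally singular 2-dimensional $\mathbb F_0$-subspace $L$ of $\mathbb F_0^6$ spans over $\mathbb F$ a totally singular 2-dimensional subspace $\langle L\rangle_{\mathbb F}$ of $\mathbb F^6$. The line-Grassmannian $Q^+_2(5,\mathbb F)$ has as points the totally singular 2-dimensional subspaces of $\mathbb F^6$ and as lines the sets $\{Z: X\subset Z\subset Y\}$ of such subspaces, for $X$ a totally singular 1-space and $Y$ a totally singular 3-space with $X\subset Y$. A subspace of a point-line geometry is a set of points containing every line that meets it in at least two points; the span is the smallest subspace containing a set. $Q^+_2(5,\mathbb F)$ is $\mathbb F_0$-generated if the span of $\{\langle L\rangle_{\mathbb F}: L \text{ a line of } Q^+(5,\mathbb F_0)\}$ in $Q^+_2(5,\mathbb F)$ is the whole point set. *)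

theory Defs
  imports "HOL-Analysis.Finite_Cartesian_Product"
begin

text \<open>Vectors of F^6 are modelled as 'a^6 (index type 6 = {0,...,5}).\<close>

type_synonym 'a vec6 = "'a ^ 6"

definition smul :: "'a::field \<Rightarrow> 'a vec6 \<Rightarrow> 'a vec6" where
  "smul c v = (\<chi> i. c * v $ i)"

definition qform :: "'a::field vec6 \<Rightarrow> 'a" where
  "qform v = v $ 0 * v $ 1 + v $ 2 * v $ 3 + v $ 4 * v $ 5"

definition is_subfield :: "'a::field set \<Rightarrow> bool" where
  "is_subfield K \<longleftrightarrow> 0 \<in> K \<and> 1 \<in> K \<and>
     (\<forall>x\<in>K. \<forall>y\<in>K. x + y \<in> K \<and> x * y \<in> K) \<and>
     (\<forall>x\<in>K. - x \<in> K) \<and> (\<forall>x\<in>K. x \<noteq> 0 \<longrightarrow> inverse x \<in> K)"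

definition coords_in :: "'a::field set \<Rightarrow> 'a vec6 set" where
  "coords_in K = {v. \<forall>i. v $ i \<in> K}"

definition is_ksubspace :: "'a::field set \<Rightarrow> 'a vec6 set \<Rightarrow> bool" where
  "is_ksubspace K W \<longleftrightarrow> W \<subseteq> coords_in K \<and> 0 \<in> W \<and>
     (\<forall>u\<in>W. \<forall>v\<in>W. u + v \<in> W) \<and> (\<forall>c\<in>K. \<forall>v\<in>W. smul c v \<in> W)"

definition kspan :: "'a::field set \<Rightarrow> 'a vec6 set \<Rightarrow> 'a vec6 set" where
  "kspan K S = \<Inter> {W. is_ksubspace K W \<and> S \<subseteq> W}"

definition kindep :: "'a::field set \<Rightarrow> 'a vec6 set \<Rightarrow> bool" where
  "kindep K B \<longleftrightarrow> finite B \<and> (\<forall>c. (\<forall>b\<in>B. c b \<in> K) \<longrightarrow>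
      (\<Sum>b\<in>B. smul (c b) b) = 0 \<longrightarrow> (\<forall>b\<in>B. c b = 0))"

definition kdim_subspace :: "'a::field set \<Rightarrow> nat \<Rightarrow> 'a vec6 set \<Rightarrow> bool" where
  "kdim_subspace K k W \<longleftrightarrow> is_ksubspace K W \<and>
     (\<exists>B. B \<subseteq> coords_in K \<and> kindep K B \<and> card B = k \<and> kspan K B = W)"

definition totally_singular :: "'a::field vec6 set \<Rightarrow> bool" where
  "totally_singular W \<longleftrightarrow> (\<forall>w\<in>W. qform w = 0)"

text \<open>Totally singular k-dimensional K-subspaces of K^6 (K = UNIV gives F^6).\<close>
definition ts_subspaces :: "'a::field set \<Rightarrow> nat \<Rightarrow> 'a vec6 set set" where
  "ts_subspaces K k = {W. kdim_subspace K k W \<and> totally_singular W}"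

definition grass_points :: "'a::field vec6 set set" where
  "grass_points = ts_subspaces UNIV 2"

definition grass_lines :: "'a::field vec6 set set set" where
  "grass_lines = {{Z \<in> grass_points. X \<subseteq> Z \<and> Z \<subseteq> Y} | X Y.
      X \<in> ts_subspaces UNIV 1 \<and> Y \<in> ts_subspaces UNIV 3 \<and> X \<subseteq> Y}"

definition geom_subspace :: "'a::field vec6 set set \<Rightarrow> bool" where
  "geom_subspace P \<longleftrightarrow> P \<subseteq> grass_points \<and>
     (\<forall>l\<in>grass_lines. (\<exists>x y. x \<noteq> y \<and> x \<in> l \<inter> P \<and> y \<in> l \<inter> P) \<longrightarrow> l \<subseteq> P)"

definition geom_span :: "'a::field vec6 set set \<Rightarrow> 'a vec6 set set" where
  "geom_span S = \<Inter> {P. geom_subspace P \<and> S \<subseteq> P}"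

definition subfield_generated :: "'a::field set \<Rightarrow> bool" where
  "subfield_generated K \<longleftrightarrow>
     geom_span ((\<lambda>L. kspan UNIV L) ` ts_subspaces K 2) = grass_points"

end

theory Submission
  imports Defs "HOL-Analysis.Cartesian_Space"
begin

text \<open>
  Call a point of \<open>Q\<^sup>+\<^sub>2(5,F)\<close> quasi-rational if it contains a nonzero vector of \<open>F\<^sub>0\<^sup>6\<close> or
  lies in a generator (totally singular 3-space) spanned by vectors of \<open>F\<^sub>0\<^sup>6\<close>. Every
  \<open>F\<^sub>0\<close>-line spans a quasi-rational point, and the quasi-rational points form a subspace: if a
  line \<open>{Z. X \<subset> Z \<subset> Y}\<close> contains two of them, then \<open>X\<close> contains a rational vector or \<open>Y\<close> is a
  rational generator. This rests on two facts: both generators through a rational totally singular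
  line are rational, and a linear system with coefficients in \<open>F\<^sub>0\<close> that has a solution over
  \<open>F\<close> on which a given \<open>F\<^sub>0\<close>-linear functional does not vanish also has such a solution over
  \<open>F\<^sub>0\<close> (Gaussian elimination). For \<open>\<alpha> \<notin> F\<^sub>0\<close> the point spanned by \<open>e\<^sub>1 + \<alpha>e\<^sub>3\<close> and
  \<open>\<alpha>e\<^sub>2 - e\<^sub>4 + e\<^sub>5\<close> is not quasi-rational, so the \<open>F\<^sub>0\<close>-lines do not generate.
  Coordinates are indexed from 0 below, so \<open>e\<^sub>1 = axis 0 1\<close>.
\<close>

section \<open>Coordinates and the polar form\<close>

lemma UNIV_6: "(UNIV::6 set) = {0,1,2,3,4,5}"
proof -
  have "card (UNIV::6 set) = 6" by simp
  moreover have "card ({0,1,2,3,4,5}::6 set) = 6" by simp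
  ultimately show ?thesis by (metis card_subset_eq finite subset_UNIV)
qed

lemma all_6: "(\<forall>i::6. P i) \<longleftrightarrow> P 0 \<and> P 1 \<and> P 2 \<and> P 3 \<and> P 4 \<and> P 5"
  by (metis UNIV_I empty_iff insert_iff UNIV_6)

lemma vec6_eq_iff:
  "(u::'a^6) = v \<longleftrightarrow> u$0 = v$0 \<and> u$1 = v$1 \<and> u$2 = v$2 \<and> u$3 = v$3 \<and> u$4 = v$4 \<and> u$5 = v$5"
  by (simp add: vec_eq_iff all_6)

definition polar :: "'a::field vec6 \<Rightarrow> 'a vec6 \<Rightarrow> 'a" where
  "polar u v = u$0 * v$1 + u$1 * v$0 + u$2 * v$3 + u$3 * v$2 + u$4 * v$5 + u$5 * v$4"

lemma polar_sym: "polar u v = polar v u"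
  by (simp add: polar_def algebra_simps)

lemma polar_add_left: "polar (u + v) w = polar u w + polar v w"
  and polar_add_right: "polar w (u + v) = polar w u + polar w v"
  and polar_diff_left: "polar (u - v) w = polar u w - polar v w"
  and polar_diff_right: "polar w (u - v) = polar w u - polar w v"
  and polar_scale_left: "polar (c *s u) w = c * polar u w"
  and polar_scale_right: "polar w (c *s u) = c * polar w u"
  by (simp_all add: polar_def algebra_simps)

lemma polar_zero_left [simp]: "polar 0 w = 0"
  and polar_zero_right [simp]: "polar w 0 = 0"
  by (simp_all add: polar_def)

lemma polar_sum_left: "polar (\<Sum>a\<in>A. f a) w = (\<Sum>a\<in>A. polar (f a) w)"
  by (induction A rule: infinite_finite_induct) (simp_all add: polar_add_left)

lemma polar_sum_right: "polar w (\<Sum>a\<in>A. f a) = (\<Sum>a\<in>A. polar w (f a))"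
  by (induction A rule: infinite_finite_induct) (simp_all add: polar_add_right)

lemma qform_add: "qform (u + v) = qform u + qform v + polar u v"
  and qform_diff: "qform (u - v) = qform u + qform v - polar u v"
  and qform_scale: "qform (c *s u) = c^2 * qform u"
  and polar_self: "polar u u = 2 * qform u"
  by (simp_all add: qform_def polar_def algebra_simps power2_eq_square)

lemma polar_expansion: "polar u v = (\<Sum>i\<in>UNIV. v$i * polar u (axis i 1))"
proof -
  have "polar u v = polar u (\<Sum>i\<in>UNIV. v$i *s axis i 1)"
    by (simp add: basis_expansion)
  then show ?thesis
    by (simp add: polar_sum_right polar_scale_right)
qed

lemma polar_axis:
  "polar (axis 0 1) x = x$1" "polar (axis 1 1) x = x$0" "polar (axis 2 1) x = x$3"
  "polar (axis 3 1) x = x$2" "polar (axis 4 1) x = x$5" "polar (axis 5 1) x = x$4"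
  by (simp_all add: polar_def axis_def)

lemma polar_nondegenerate:
  assumes "v \<noteq> 0"
  shows "\<exists>e. polar v e \<noteq> 0"
proof -
  have "polar v (axis 1 1) = v$0" "polar v (axis 0 1) = v$1" "polar v (axis 3 1) = v$2"
    "polar v (axis 2 1) = v$3" "polar v (axis 5 1) = v$4" "polar v (axis 4 1) = v$5"
    by (simp_all add: polar_sym[of v] polar_axis)
  moreover have "v$0 \<noteq> 0 \<or> v$1 \<noteq> 0 \<or> v$2 \<noteq> 0 \<or> v$3 \<noteq> 0 \<or> v$4 \<noteq> 0 \<or> v$5 \<noteq> 0"
    using assms by (auto simp: vec6_eq_iff)
  ultimately show ?thesis
    by metis
qed

section \<open>Subspaces of \<open>F\<^sup>6\<close>\<close>

lemma smul_eq_vector_scalar_mult: "smul = (*s)"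
  by (auto simp: fun_eq_iff smul_def vector_scalar_mult_def)

lemma coords_in_UNIV [simp]: "coords_in UNIV = UNIV"
  by (auto simp: coords_in_def)

lemma is_ksubspace_UNIV_iff: "is_ksubspace UNIV W \<longleftrightarrow> vec.subspace W"
  by (simp add: is_ksubspace_def vec.subspace_def smul_eq_vector_scalar_mult)

lemma kspan_UNIV: "kspan UNIV S = vec.span S"
proof -
  have "vec.span S \<subseteq> kspan UNIV S"
    unfolding kspan_def is_ksubspace_UNIV_iff by (auto intro: vec.span_minimal[THEN subsetD])
  moreover have "kspan UNIV S \<subseteq> vec.span S"
    unfolding kspan_def is_ksubspace_UNIV_iff using vec.span_superset vec.subspace_span by blast
  ultimately show ?thesis by blast
qed

lemma kindep_UNIV_iff: "kindep UNIV B \<longleftrightarrow> vec.independent B"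
  by (auto simp: kindep_def vec.independent_explicit smul_eq_vector_scalar_mult)

lemma kdim_subspace_UNIV_iff: "kdim_subspace UNIV k W \<longleftrightarrow> vec.subspace W \<and> vec.dim W = k"
proof
  assume "kdim_subspace UNIV k W"
  then obtain B where "vec.subspace W" "vec.independent B" "card B = k" "vec.span B = W"
    unfolding kdim_subspace_def is_ksubspace_UNIV_iff kindep_UNIV_iff kspan_UNIV by blast
  then show "vec.subspace W \<and> vec.dim W = k"
    using vec.dim_span_eq_card_independent by metis
next
  assume W: "vec.subspace W \<and> vec.dim W = k"
  obtain B where B: "B \<subseteq> W" "vec.independent B" "W \<subseteq> vec.span B" "card B = vec.dim W"
    using vec.basis_exists by blast
  then have "vec.span B = W"
    using W vec.span_subspace by blast
  then show "kdim_subspace UNIV k W"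
    unfolding kdim_subspace_def is_ksubspace_UNIV_iff kindep_UNIV_iff kspan_UNIV using W B by auto
qed

lemma ts_subspaces_UNIV_iff:
  "W \<in> ts_subspaces UNIV k \<longleftrightarrow> vec.subspace W \<and> vec.dim W = k \<and> totally_singular W"
  by (simp add: ts_subspaces_def kdim_subspace_UNIV_iff)

lemma grass_points_iff:
  "Z \<in> grass_points \<longleftrightarrow> vec.subspace Z \<and> vec.dim Z = 2 \<and> totally_singular Z"
  by (simp add: grass_points_def ts_subspaces_UNIV_iff)

lemma totally_singular_polar:
  assumes "vec.subspace W" "totally_singular W" "u \<in> W" "v \<in> W"
  shows "polar u v = 0"
proof -
  have "u + v \<in> W"
    using assms by (simp add: vec.subspace_add)
  then show ?thesis
    using assms qform_add[of u v] by (simp add: totally_singular_def)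
qed

lemma independent_pair:
  assumes "u \<noteq> 0" "v \<notin> vec.span {u}"
  shows "vec.independent {u, v}" "vec.dim (vec.span {u, v}) = 2"
proof -
  have "v \<noteq> u"
    using assms(2) vec.span_base[of u "{u}"] by auto
  moreover have "vec.independent (insert v {u})"
    using assms vec.independent_insert[of v "{u}"] by simp
  ultimately show "vec.independent {u, v}" "vec.dim (vec.span {u, v}) = 2"
    using vec.dim_span_eq_card_independent[of "{u, v}"] by (simp_all add: insert_commute)
qed

lemma span_pair_elem: "x \<in> vec.span {u, v} \<Longrightarrow> \<exists>a b. x = a *s u + b *s v"
  by (auto simp: vec.span_breakdown_eq vec.span_singleton diff_eq_eq) (metis add.commute)

lemma subspace_scale_iff:
  assumes "vec.subspace S" "c \<noteq> 0"
  shows "c *s x \<in> S \<longleftrightarrow> x \<in> S"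
  using assms vec.subspace_scale[OF assms(1), of "c *s x" "1 / c"] vec.subspace_scale[OF assms(1)]
  by auto

lemma span_insert_subspace_elem:
  assumes "vec.subspace R" "x \<in> vec.span (insert s R)"
  obtains \<rho> k where "\<rho> \<in> R" "x = \<rho> + k *s s"
proof -
  obtain k where "x - k *s s \<in> R"
    using assms vec.span_breakdown_eq vec.span_eq_iff by metis
  then show ?thesis
    using that[of "x - k *s s" k] by simp
qed

lemma span_insert_eq_of_dim:
  assumes "vec.subspace A" "vec.subspace C" "C \<subseteq> A" "v \<in> A" "v \<notin> C" "vec.dim A = vec.dim C + 1"
  shows "vec.span (insert v C) = A"
proof -
  have "vec.span (insert v C) \<subseteq> A"
    using assms by (simp add: vec.span_minimal)
  moreover have "vec.dim (vec.span (insert v C)) = vec.dim C + 1"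
    using vec.dim_insert[of v C] assms(2,5) by (simp add: vec.span_eq_iff[THEN iffD2])
  ultimately show ?thesis
    using vec.subspace_dim_equal[OF vec.subspace_span assms(1)] assms(6) by simp
qed

lemma inter_eq_of_dim:
  assumes "vec.subspace A" "vec.subspace B" "vec.subspace C" "vec.dim A = vec.dim C + 1"
    "vec.dim B = vec.dim C + 1" "C \<subseteq> A" "C \<subseteq> B" "A \<noteq> B"
  shows "A \<inter> B = C"
proof (rule ccontr)
  assume "A \<inter> B \<noteq> C"
  then obtain v where "v \<in> A" "v \<in> B" "v \<notin> C"
    using assms(6,7) by blast
  then have "vec.span (insert v C) = A" "vec.span (insert v C) = B"
    using span_insert_eq_of_dim assms by auto
  then show False
    using assms(8) by simp
qed

section \<open>Orthogonal complements\<close>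

definition perp :: "'a::field vec6 set \<Rightarrow> 'a vec6 set" where
  "perp B = {x. \<forall>b\<in>B. polar b x = 0}"

lemma subspace_perp: "vec.subspace (perp B)"
  unfolding vec.subspace_def perp_def by (simp add: polar_add_right polar_scale_right)

lemma perp_antimono: "A \<subseteq> B \<Longrightarrow> perp B \<subseteq> perp A"
  by (auto simp: perp_def)

lemma perp_span: "perp (vec.span B) = perp B"
proof
  show "perp (vec.span B) \<subseteq> perp B"
    unfolding perp_def using vec.span_base by blast
  show "perp B \<subseteq> perp (vec.span B)"
  proof
    fix x assume x: "x \<in> perp B"
    have "vec.subspace {u. polar u x = 0}"
      unfolding vec.subspace_def by (simp add: polar_add_left polar_scale_left)
    then have "vec.span B \<subseteq> {u. polar u x = 0}"
      using x by (intro vec.span_minimal) (auto simp: perp_def)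
    then show "x \<in> perp (vec.span B)"
      by (auto simp: perp_def)
  qed
qed

lemma perp_of_span_insert:
  assumes "vec.subspace C" "Y = vec.span (insert z C)" "w \<in> perp C" "polar z w = 0"
  shows "w \<in> perp Y"
  using assms perp_span[of "insert z C"] by (auto simp: perp_def)

lemma polar_dual_family_comb:
  assumes "finite B" "b0 \<in> B" "\<forall>b\<in>B. \<forall>b'\<in>B. polar b (x b') = (if b = b' then 1 else 0)"
  shows "polar b0 (\<Sum>b\<in>B. c b *s x b) = c b0"
proof -
  have "(\<Sum>b\<in>B. c b * polar b0 (x b)) = (\<Sum>b\<in>B. if b = b0 then c b else 0)"
    using assms by (intro sum.cong) auto
  then show ?thesis
    using assms by (simp add: polar_sum_right polar_scale_right)
qed

lemma polar_dual_family:
  assumes "finite B" "vec.independent B"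
  shows "\<exists>x. \<forall>b\<in>B. \<forall>b'\<in>B. polar b (x b') = (if b = b' then 1 else 0)"
  using assms
proof (induction B rule: finite_induct)
  case empty
  then show ?case by simp
next
  case (insert a B)
  then have "vec.independent B" and a: "a \<notin> vec.span B"
    using vec.independent_insert[of a B] by auto
  then obtain x where x: "\<forall>b\<in>B. \<forall>b'\<in>B. polar b (x b') = (if b = b' then 1 else 0)"
    using insert.IH by blast
  define s where "s = a - (\<Sum>b\<in>B. polar a (x b) *s b)"
  have "s \<noteq> 0"
    using a vec.span_sum[of B "\<lambda>b. polar a (x b) *s b"]
    by (auto simp: s_def vec.span_scale vec.span_base)
  then obtain e where e: "polar s e \<noteq> 0"
    using polar_nondegenerate by blast
  define e' where "e' = e - (\<Sum>b\<in>B. polar b e *s x b)"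
  have e'_B: "polar b0 e' = 0" if "b0 \<in> B" for b0
    using polar_dual_family_comb[OF insert.hyps(1) that x] by (simp add: e'_def polar_diff_right)
  have "polar a e' = polar s e"
    by (simp add: e'_def s_def polar_diff_right polar_diff_left polar_sum_right polar_sum_left
        polar_scale_right polar_scale_left polar_sym mult.commute)
  then have a_e': "polar a e' \<noteq> 0"
    using e by simp
  define xa where "xa = (1 / polar a e') *s e'"
  have xa: "polar a xa = 1" "\<And>b. b \<in> B \<Longrightarrow> polar b xa = 0"
    using a_e' e'_B by (simp_all add: xa_def polar_scale_right)
  define x' where "x' = (\<lambda>b. if b = a then xa else x b - polar a (x b) *s xa)"
  have "\<forall>b\<in>insert a B. \<forall>b'\<in>insert a B. polar b (x' b') = (if b = b' then 1 else 0)"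
    using x xa insert.hyps(2) by (auto simp: x'_def polar_diff_right polar_scale_right)
  then show ?case
    by blast
qed

lemma dual_family_inj_dim:
  assumes fin: "finite B" and x: "\<forall>b\<in>B. \<forall>b'\<in>B. polar b (x b') = (if b = b' then 1 else 0)"
  shows "inj_on x B" "vec.dim (vec.span (x ` B)) = card B"
proof -
  show inj: "inj_on x B"
    using x by (intro inj_onI) (metis zero_neq_one)
  have "vec.independent (x ` B)"
    unfolding vec.independent_explicit
  proof (intro conjI allI impI ballI)
    show "finite (x ` B)" using fin by simp
    fix u w assume "(\<Sum>v\<in>x ` B. u v *s v) = 0" "w \<in> x ` B"
    then show "u w = 0"
      using polar_dual_family_comb[OF fin _ x, of _ "u \<circ> x"] by (auto simp: sum.reindex[OF inj])
  qed
  then have "vec.dim (x ` B) = card (x ` B)"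
    by (rule vec.dim_eq_card_independent)
  then show "vec.dim (vec.span (x ` B)) = card B"
    using card_image[OF inj] by (simp add: vec.dim_span)
qed

lemma dim_perp:
  assumes "vec.independent B"
  shows "vec.dim (perp B) + card B = 6"
proof -
  have fin: "finite B"
    using assms vec.finiteI_independent by blast
  obtain x where x: "\<forall>b\<in>B. \<forall>b'\<in>B. polar b (x b') = (if b = b' then 1 else 0)"
    using polar_dual_family[OF fin assms] by blast
  note polar_comb = polar_dual_family_comb[OF fin _ x]
  define C where "C = vec.span (x ` B)"
  txt \<open>\<open>F\<^sup>6\<close> is the direct sum of \<open>perp B\<close> and the span \<open>C\<close> of the dual family.\<close>
  have "perp B \<inter> C \<subseteq> {0}"
  proof
    fix v assume v: "v \<in> perp B \<inter> C"
    then obtain u where "v = (\<Sum>w\<in>x ` B. u w *s w)"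
      using fin vec.span_finite[of "x ` B"] by (auto simp: C_def)
    then have c: "v = (\<Sum>b\<in>B. u (x b) *s x b)"
      by (simp add: sum.reindex[OF dual_family_inj_dim(1)[OF fin x]])
    then have "\<forall>b\<in>B. u (x b) = 0"
      using v polar_comb by (auto simp: perp_def)
    then show "v \<in> {0}"
      using c by simp
  qed
  then have int0: "vec.dim (perp B \<inter> C) = 0"
    by simp
  have sum_UNIV: "{u + v |u v. u \<in> perp B \<and> v \<in> C} = UNIV"
  proof -
    have "v - (\<Sum>b\<in>B. polar b v *s x b) \<in> perp B" for v
      using polar_comb by (simp add: perp_def polar_diff_right)
    moreover have "(\<Sum>b\<in>B. c b *s x b) \<in> C" for c
      unfolding C_def by (intro vec.span_sum vec.span_scale vec.span_base) simp
    ultimately have "v \<in> {u + v |u v. u \<in> perp B \<and> v \<in> C}" for v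
      by (intro CollectI exI[of _ "v - (\<Sum>b\<in>B. polar b v *s x b)"] exI[of _ "\<Sum>b\<in>B. polar b v *s x b"]) simp
    then show ?thesis by blast
  qed
  have "vec.dim {u + v |u v. u \<in> perp B \<and> v \<in> C} + vec.dim (perp B \<inter> C)
      = vec.dim (perp B) + vec.dim C"
    by (rule vec.dim_sums_Int[OF subspace_perp]) (simp add: C_def)
  moreover have "vec.dim (UNIV :: 'a vec6 set) = 6"
    using vec_dim_card[where 'a='a and 'n=6] by simp
  moreover have "vec.dim C = card B"
    using dual_family_inj_dim(2)[OF fin x] by (simp add: C_def)
  ultimately show ?thesis
    unfolding sum_UNIV int0 by simp
qed

lemma totally_singular_3_maximal:
  assumes W: "vec.subspace W" "totally_singular W" "vec.dim W = 3" and v: "v \<in> perp W"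
  shows "v \<in> W"
proof -
  obtain B where B: "B \<subseteq> W" "vec.independent B" "W \<subseteq> vec.span B" "card B = vec.dim W"
    using vec.basis_exists by blast
  have "W \<subseteq> perp B"
    unfolding perp_def using B(1) totally_singular_polar[OF W(1,2)] by blast
  moreover have "vec.dim (perp B) = 3"
    using dim_perp[OF B(2)] B(4) W(3) by simp
  ultimately have "W = perp B"
    using vec.subspace_dim_equal[OF W(1) subspace_perp] W(3) by simp
  then show ?thesis
    using v B(1) by (auto simp: perp_def)
qed

lemma perp_nonzero:
  assumes "finite R" "card R < 6"
  shows "\<exists>x. x \<noteq> 0 \<and> x \<in> perp R"
proof -
  obtain B where B: "B \<subseteq> vec.span R" "vec.independent B" "vec.span R \<subseteq> vec.span B"
    "card B = vec.dim (vec.span R)"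
    using vec.basis_exists by blast
  have "card B \<le> card R"
    using B(4) vec.dim_le_card[of "vec.span R" R] assms(1) vec.span_superset by force
  then have "vec.dim (perp B) \<noteq> 0"
    using dim_perp[OF B(2)] assms(2) by linarith
  then obtain x where "x \<in> perp B" "x \<noteq> 0"
    using vec.dim_eq_0[of "perp B"] by auto
  moreover have "perp B \<subseteq> perp R"
    using perp_span[of B] perp_antimono B(3) vec.span_superset[of R] by (metis order_trans)
  ultimately show ?thesis
    by blast
qed

section \<open>Linear systems over a subfield\<close>

lemma
  assumes "is_subfield K"
  shows subfield_zero: "0 \<in> K" and subfield_one: "1 \<in> K"
    and subfield_add: "x \<in> K \<Longrightarrow> y \<in> K \<Longrightarrow> x + y \<in> K"
    and subfield_mult: "x \<in> K \<Longrightarrow> y \<in> K \<Longrightarrow> x * y \<in> K"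
    and subfield_uminus: "x \<in> K \<Longrightarrow> - x \<in> K"
    and subfield_inverse: "x \<in> K \<Longrightarrow> inverse x \<in> K"
  using assms unfolding is_subfield_def by (simp_all, metis inverse_zero)

lemma subfield_diff: "is_subfield K \<Longrightarrow> x \<in> K \<Longrightarrow> y \<in> K \<Longrightarrow> x - y \<in> K"
  by (metis diff_conv_add_uminus subfield_add subfield_uminus)

lemma subfield_divide: "is_subfield K \<Longrightarrow> x \<in> K \<Longrightarrow> y \<in> K \<Longrightarrow> x / y \<in> K"
  by (metis divide_inverse subfield_mult subfield_inverse)

lemma subfield_sum: "is_subfield K \<Longrightarrow> (\<And>i. i \<in> A \<Longrightarrow> f i \<in> K) \<Longrightarrow> (\<Sum>i\<in>A. f i) \<in> K"
  by (induction A rule: infinite_finite_induct) (simp_all add: subfield_zero subfield_add)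

lemma
  assumes "is_subfield K" "u \<in> coords_in K" "v \<in> coords_in K"
  shows coords_in_diff: "u - v \<in> coords_in K"
    and polar_in_subfield: "polar u v \<in> K"
    and qform_in_subfield: "qform u \<in> K"
  using assms unfolding coords_in_def polar_def qform_def
  by (simp_all add: subfield_add subfield_diff subfield_mult)

lemma coords_in_scale: "is_subfield K \<Longrightarrow> c \<in> K \<Longrightarrow> v \<in> coords_in K \<Longrightarrow> c *s v \<in> coords_in K"
  by (simp add: coords_in_def subfield_mult)

lemma axis_in_coords_in: "is_subfield K \<Longrightarrow> axis i 1 \<in> coords_in K"
  by (simp add: coords_in_def axis_def subfield_zero subfield_one)

lemma sum_mult_delta:
  "finite A \<Longrightarrow> (\<Sum>i\<in>A. f i * (if i = i0 then 1 else 0)) = (if i0 \<in> A then f i0 else 0 :: 'a::semiring_1)"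
  by (simp add: if_distrib[of "times _"] sum.delta cong: if_cong)

lemma subfield_system_solution:
  fixes a :: "'i \<Rightarrow> 'j \<Rightarrow> 'a::field" and l c :: "'i \<Rightarrow> 'a"
  assumes K: "is_subfield K" and I: "finite I"
    and "\<forall>i\<in>I. \<forall>j\<in>J. a i j \<in> K" "\<forall>i\<in>I. l i \<in> K"
    and "\<forall>j\<in>J. (\<Sum>i\<in>I. c i * a i j) = 0" "(\<Sum>i\<in>I. c i * l i) \<noteq> 0"
  shows "\<exists>d. (\<forall>i\<in>I. d i \<in> K) \<and> (\<forall>j\<in>J. (\<Sum>i\<in>I. d i * a i j) = 0) \<and> (\<Sum>i\<in>I. d i * l i) \<noteq> 0"
  using I assms(3-)
proof (induction I arbitrary: a l c rule: finite_induct)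
  case empty
  then show ?case by simp
next
  case (insert b I)
  have sum_insert: "(\<Sum>i\<in>insert b I. f i) = f b + (\<Sum>i\<in>I. f i)" for f :: "'i \<Rightarrow> 'a"
    using insert.hyps by simp
  have sum_upd: "(\<Sum>i\<in>I. (if i = b then t else d i) * f i) = (\<Sum>i\<in>I. d i * f i)" for d f t
    using insert.hyps(2) by (intro sum.cong) auto
  show ?case
  proof (cases "\<forall>j\<in>J. a b j = 0")
    case a_b: True
    then have c_I: "\<forall>j\<in>J. (\<Sum>i\<in>I. c i * a i j) = 0"
      using insert.prems(3) by (simp add: sum_insert)
    show ?thesis
    proof (cases "(\<Sum>i\<in>I. c i * l i) = 0")
      case False
      then obtain d where d: "\<forall>i\<in>I. d i \<in> K" "\<forall>j\<in>J. (\<Sum>i\<in>I. d i * a i j) = 0"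
        "(\<Sum>i\<in>I. d i * l i) \<noteq> 0"
        using insert.IH c_I insert.prems(1,2) by blast
      then show ?thesis
        using a_b by (intro exI[of _ "\<lambda>i. if i = b then 0 else d i"])
          (simp add: sum_insert sum_upd subfield_zero[OF K])
    next
      case True
      then have "l b \<noteq> 0"
        using insert.prems(4) by (simp add: sum_insert)
      moreover have "(\<Sum>i\<in>I. (if i = b then 1 else 0) * f i) = 0" for f :: "'i \<Rightarrow> 'a"
        using sum_upd[of 1 "\<lambda>_. 0" f] by simp
      ultimately show ?thesis
        using a_b K
        by (intro exI[of _ "\<lambda>i. if i = b then 1 else 0"]) (simp add: sum_insert subfield_zero subfield_one)
    qed
  next
    case False
    then obtain j0 where j0: "j0 \<in> J" "a b j0 \<noteq> 0"
      by blast
    txt \<open>Equation \<open>j0\<close> expresses the unknown \<open>b\<close> as \<open>e d\<close> in terms of the others.\<close>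
    define e where "e d = - (\<Sum>i\<in>I. d i * a i j0) / a b j0" for d :: "'i \<Rightarrow> 'a"
    define a' where "a' i j = a i j - a i j0 / a b j0 * a b j" for i j
    define l' where "l' i = l i - a i j0 / a b j0 * l b" for i
    have reduce: "(\<Sum>i\<in>I. d i * a' i j) = e d * a b j + (\<Sum>i\<in>I. d i * a i j)"
      "(\<Sum>i\<in>I. d i * l' i) = e d * l b + (\<Sum>i\<in>I. d i * l i)" for d j
      by (simp_all add: a'_def l'_def e_def right_diff_distrib sum_subtractf sum_distrib_right
          sum_divide_distrib[symmetric] mult.assoc)
    have "c b = e c"
      using insert.prems(3) j0 by (simp add: sum_insert e_def field_simps eq_neg_iff_add_eq_0)
    then have "\<forall>j\<in>J. (\<Sum>i\<in>I. c i * a' i j) = 0" "(\<Sum>i\<in>I. c i * l' i) \<noteq> 0"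
      using insert.prems(3,4) by (simp_all add: reduce sum_insert)
    moreover have "\<forall>i\<in>I. \<forall>j\<in>J. a' i j \<in> K" "\<forall>i\<in>I. l' i \<in> K"
      using insert.prems(1,2) j0 K
      by (simp_all add: a'_def l'_def subfield_diff subfield_mult subfield_divide)
    ultimately obtain d where d: "\<forall>i\<in>I. d i \<in> K" "\<forall>j\<in>J. (\<Sum>i\<in>I. d i * a' i j) = 0"
      "(\<Sum>i\<in>I. d i * l' i) \<noteq> 0"
      using insert.IH by blast
    have "e d \<in> K"
      using d(1) insert.prems(1) j0 K unfolding e_def
      by (intro subfield_divide subfield_uminus subfield_sum subfield_mult) auto
    then show ?thesis
      using d by (intro exI[of _ "\<lambda>i. if i = b then e d else d i"]) (simp add: sum_insert sum_upd reduce)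
  qed
qed

lemma rational_perp_vector:
  assumes K: "is_subfield K" and R: "finite R" "card R < 6" "R \<subseteq> coords_in K"
  shows "\<exists>x\<in>coords_in K. x \<noteq> 0 \<and> x \<in> perp R"
proof -
  obtain y where y: "y \<noteq> 0" "y \<in> perp R"
    using perp_nonzero[OF R(1,2)] by blast
  then obtain i0 where i0: "y$i0 \<noteq> 0"
    by (metis vec_eq_iff zero_index)
  have "\<exists>d. (\<forall>i\<in>UNIV. d i \<in> K) \<and> (\<forall>r\<in>R. (\<Sum>i\<in>UNIV. d i * polar r (axis i 1)) = 0) \<and>
      (\<Sum>i\<in>UNIV. d i * (if i = i0 then 1 else 0)) \<noteq> 0"
    using y i0 R(3) K
    by (intro subfield_system_solution[where c = "\<lambda>i. y$i"])
      (auto simp: polar_expansion[symmetric] perp_def polar_in_subfield axis_in_coords_in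
        subfield_zero subfield_one sum_mult_delta)
  then obtain d where d: "\<forall>i. d i \<in> K" "\<forall>r\<in>R. (\<Sum>i\<in>UNIV. d i * polar r (axis i 1)) = 0" "d i0 \<noteq> 0"
    by (auto simp: sum_mult_delta)
  define x :: "'a vec6" where "x = (\<chi> i. d i)"
  have "polar r x = (\<Sum>i\<in>UNIV. d i * polar r (axis i 1))" for r
    using polar_expansion[of r x] by (simp add: x_def)
  then have "x \<in> coords_in K" "x \<in> perp R"
    using d by (simp_all add: x_def coords_in_def perp_def)
  moreover have "x \<noteq> 0"
    using d(3) by (metis x_def vec_lambda_beta zero_index)
  ultimately show ?thesis
    by blast
qed

lemma rational_polar_solution:
  assumes K: "is_subfield K" and R: "finite R" "R \<subseteq> coords_in K"
    and b: "\<forall>r\<in>R. b r \<in> K" and y: "\<forall>r\<in>R. polar r y = b r"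
  shows "\<exists>x\<in>coords_in K. \<forall>r\<in>R. polar r x = b r"
proof -
  txt \<open>Homogenize: the unknown \<open>None\<close> is the coefficient of the right-hand side.\<close>
  define a where "a k r = (case k of None \<Rightarrow> - b r | Some i \<Rightarrow> polar r (axis i 1))" for k r
  define I where "I = insert None (range (Some :: 6 \<Rightarrow> 6 option))"
  have sum_I: "(\<Sum>k\<in>I. f k) = f None + (\<Sum>i\<in>UNIV. f (Some i))" for f :: "6 option \<Rightarrow> 'a"
    by (simp add: I_def sum.reindex)
  have a_K: "\<forall>k\<in>I. \<forall>r\<in>R. a k r \<in> K"
    using R(2) b K by (auto simp: I_def a_def polar_in_subfield axis_in_coords_in subfield_uminus)
  have y_sol: "\<forall>r\<in>R. (\<Sum>k\<in>I. (case k of None \<Rightarrow> 1 | Some i \<Rightarrow> y$i) * a k r) = 0"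
    using y by (simp add: sum_I a_def polar_expansion[symmetric])
  have "\<exists>d. (\<forall>k\<in>I. d k \<in> K) \<and> (\<forall>r\<in>R. (\<Sum>k\<in>I. d k * a k r) = 0) \<and>
      (\<Sum>k\<in>I. d k * (if k = None then 1 else 0)) \<noteq> 0"
    using K a_K y_sol
    by (intro subfield_system_solution[where c = "\<lambda>k. case k of None \<Rightarrow> 1 | Some i \<Rightarrow> y$i"])
      (auto simp: sum_I subfield_zero subfield_one)
  then obtain d where d: "\<forall>k\<in>I. d k \<in> K"
    "\<forall>r\<in>R. d None * - b r + (\<Sum>i\<in>UNIV. d (Some i) * polar r (axis i 1)) = 0" "d None \<noteq> 0"
    by (auto simp: sum_I a_def)
  define x :: "'a vec6" where "x = (\<chi> i. d (Some i) / d None)"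
  have "x \<in> coords_in K"
    using d(1) K by (simp add: x_def coords_in_def I_def subfield_divide)
  moreover have "polar r x = b r" if "r \<in> R" for r
  proof -
    have "polar r x = (\<Sum>i\<in>UNIV. d (Some i) * polar r (axis i 1)) / d None"
      using polar_expansion[of r x] by (simp add: x_def sum_divide_distrib)
    also have "\<dots> = b r"
      using d(2) that d(3) by (simp add: field_simps)
    finally show ?thesis .
  qed
  ultimately show ?thesis
    by blast
qed

lemma rational_vector_in_span_inter:
  assumes K: "is_subfield K" and A: "finite A1" "finite A2" "A1 \<subseteq> coords_in K" "A2 \<subseteq> coords_in K"
    and x0: "x0 \<noteq> 0" "x0 \<in> vec.span A1" "x0 \<in> vec.span A2"
  shows "\<exists>w\<in>coords_in K. w \<noteq> 0 \<and> w \<in> vec.span A1 \<and> w \<in> vec.span A2"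
proof -
  obtain c1 where c1: "x0 = (\<Sum>u\<in>A1. c1 u *s u)"
    using x0(2) vec.span_finite[OF A(1)] by auto
  obtain c2 where c2: "x0 = (\<Sum>u\<in>A2. c2 u *s u)"
    using x0(3) vec.span_finite[OF A(2)] by auto
  obtain j0 where j0: "x0$j0 \<noteq> 0"
    using x0(1) by (metis vec_eq_iff zero_index)
  txt \<open>Unknowns are the coefficients of both expansions, one equation per coordinate.\<close>
  define I where "I = A1 <+> A2"
  define a :: "'a vec6 + 'a vec6 \<Rightarrow> 6 \<Rightarrow> 'a" where "a = case_sum (\<lambda>u j. u$j) (\<lambda>u j. - u$j)"
  define l :: "'a vec6 + 'a vec6 \<Rightarrow> 'a" where "l = case_sum (\<lambda>u. u$j0) (\<lambda>_. 0)"
  have sum_I: "(\<Sum>i\<in>I. f i) = (\<Sum>u\<in>A1. f (Inl u)) + (\<Sum>u\<in>A2. f (Inr u))" for f :: "_ \<Rightarrow> 'a"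
    using A(1,2) by (simp add: I_def sum.Plus)
  have a_K: "\<forall>i\<in>I. \<forall>j\<in>UNIV. a i j \<in> K" and l_K: "\<forall>i\<in>I. l i \<in> K"
    using A(3,4) K by (auto simp: I_def a_def l_def coords_in_def subfield_uminus subfield_zero)
  have coord: "(\<Sum>u\<in>A1. c1 u * u$j) = x0$j" "(\<Sum>u\<in>A2. c2 u * u$j) = x0$j" for j
    by (simp add: c1, simp add: c2)
  have "(\<Sum>i\<in>I. case_sum c1 c2 i * a i j) = 0" for j
    by (simp add: sum_I a_def sum_negf coord)
  moreover have "(\<Sum>i\<in>I. case_sum c1 c2 i * l i) = x0$j0"
    by (simp add: sum_I l_def coord)
  ultimately obtain d where d: "\<forall>i\<in>I. d i \<in> K" "\<forall>j. (\<Sum>i\<in>I. d i * a i j) = 0"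
    "(\<Sum>i\<in>I. d i * l i) \<noteq> 0"
    using subfield_system_solution[OF K _ a_K l_K, of "case_sum c1 c2"] j0 A(1,2) by (auto simp: I_def)
  define w where "w = (\<Sum>u\<in>A1. d (Inl u) *s u)"
  have w2: "w = (\<Sum>u\<in>A2. d (Inr u) *s u)"
    using d(2) by (simp add: w_def vec_eq_iff sum_I a_def sum_negf)
  have "w \<in> coords_in K"
    using d(1) A(3) K unfolding w_def coords_in_def
    by (auto simp: I_def intro!: subfield_sum subfield_mult)
  moreover have "w \<noteq> 0"
  proof -
    have "w$j0 \<noteq> 0"
      using d(3) by (simp add: w_def sum_I l_def)
    then show ?thesis
      by auto
  qed
  moreover have "w \<in> vec.span A1"
    unfolding w_def by (intro vec.span_sum vec.span_scale vec.span_base)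
  moreover have "w \<in> vec.span A2"
    unfolding w2 by (intro vec.span_sum vec.span_scale vec.span_base)
  ultimately show ?thesis
    by blast
qed

section \<open>Rational generators\<close>

lemma card_insert5_less: "card {a, b, c, d, e} < 6"
  using card_length[of "[a, b, c, d, e]"] by simp

lemma rational_singular_perp_coordinate_pair:
  assumes K: "is_subfield K"
    and s1: "s1 \<in> coords_in K" "s1 \<noteq> 0" "s1$1 = 0" "s1$3 = 0" "s1$5 = 0"
    and s2: "s2 \<in> coords_in K" "s2 \<noteq> 0" "s2$0 = 0" "s2$2 = 0" "s2$4 = 0"
  shows "\<exists>s3\<in>coords_in K. qform s3 = 0 \<and> s3 \<in> perp {s2, s1} \<and> s3 \<notin> vec.span {s2, s1}"
proof -
  obtain j j' where j: "s1$j \<noteq> 0" "\<And>x::'a vec6. polar (axis j' 1) x = x$j"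
  proof -
    have "s1$0 \<noteq> 0 \<or> s1$2 \<noteq> 0 \<or> s1$4 \<noteq> 0"
      using s1 by (auto simp: vec6_eq_iff)
    then show ?thesis
      using that[of 0 1] that[of 2 3] that[of 4 5] polar_axis by blast
  qed
  txt \<open>\<open>s3\<close> lies in the totally singular coordinate plane of \<open>s1\<close>, so it is orthogonal to \<open>s1\<close>;
    vanishing at a coordinate where \<open>s1\<close> does not keeps it off \<open>\<langle>s2, s1\<rangle>\<close>.\<close>
  obtain s3 where s3: "s3 \<in> coords_in K" "s3 \<noteq> 0" "s3$1 = 0" "s3$3 = 0" "s3$5 = 0"
    "polar s2 s3 = 0" "polar (axis j' 1) s3 = 0"
    using rational_perp_vector[OF K _ card_insert5_less, of "axis 0 1" "axis 2 1" "axis 4 1" s2 "axis j' 1"]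
      s2(1) axis_in_coords_in[OF K] by (auto simp: perp_def polar_axis)
  have "s3 \<in> perp {s2, s1}"
    using s1 s3 by (simp add: perp_def polar_def)
  moreover have "s3 \<notin> vec.span {s2, s1}"
  proof
    assume "s3 \<in> vec.span {s2, s1}"
    then obtain a b where ab: "s3 = a *s s2 + b *s s1"
      using span_pair_elem by blast
    have "s2$1 \<noteq> 0 \<or> s2$3 \<noteq> 0 \<or> s2$5 \<noteq> 0"
      using s2 by (auto simp: vec6_eq_iff)
    then have "a = 0"
      using ab s1 s3 by (auto simp: vec6_eq_iff)
    then have "b = 0"
      using ab s3(7) j by simp
    then show False
      using ab \<open>a = 0\<close> s3(2) by simp
  qed
  moreover have "qform s3 = 0"
    using s3 by (simp add: qform_def)
  ultimately show ?thesis
    using s3(1) by blast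
qed

lemma rational_singular_perp:
  assumes K: "is_subfield K" and r: "r1 \<in> coords_in K" "r2 \<in> coords_in K"
  shows "\<exists>s\<in>coords_in K. qform s = 0 \<and> s \<in> perp {r1, r2} \<and> s \<notin> vec.span {r1, r2}"
proof -
  let ?R = "vec.span {r1, r2}"
  txt \<open>The coordinate subspaces \<open>x1 = x3 = x5 = 0\<close> and \<open>x0 = x2 = x4 = 0\<close> are totally singular.\<close>
  obtain s1 where s1: "s1 \<in> coords_in K" "s1 \<noteq> 0" "s1$1 = 0" "s1$3 = 0" "s1$5 = 0" "s1 \<in> perp {r1, r2}"
    using rational_perp_vector[OF K _ card_insert5_less, of "axis 0 1" "axis 2 1" "axis 4 1" r1 r2] r
      axis_in_coords_in[OF K] by (auto simp: perp_def polar_axis)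
  obtain s2 where s2: "s2 \<in> coords_in K" "s2 \<noteq> 0" "s2$0 = 0" "s2$2 = 0" "s2$4 = 0" "s2 \<in> perp {r1, r2}"
    using rational_perp_vector[OF K _ card_insert5_less, of "axis 1 1" "axis 3 1" "axis 5 1" r1 r2] r
      axis_in_coords_in[OF K] by (auto simp: perp_def polar_axis)
  show ?thesis
  proof (cases "s1 \<in> ?R \<and> s2 \<in> ?R")
    case False
    moreover have "qform s1 = 0" "qform s2 = 0"
      using s1 s2 by (simp_all add: qform_def)
    ultimately show ?thesis
      using s1 s2 by blast
  next
    case True
    have "s1 \<notin> vec.span {s2}"
      using s1 s2 by (auto simp: vec.span_singleton vec6_eq_iff)
    then have dim_s: "vec.dim (vec.span {s2, s1}) = 2"
      using independent_pair s2(2) by blast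
    have sub: "vec.span {s2, s1} \<subseteq> ?R"
      using True by (intro vec.span_minimal) auto
    have "vec.dim ?R \<le> 2"
      using vec.dim_le_card[of ?R "{r1, r2}"] card_length[of "[r1, r2]"] by simp
    then have "vec.span {s2, s1} = ?R"
      using vec.subspace_dim_equal[OF vec.subspace_span vec.subspace_span sub] dim_s by simp
    moreover have "perp {s2, s1} = perp {r1, r2}"
      using perp_span[of "{s2, s1}"] perp_span[of "{r1, r2}"] calculation by simp
    ultimately show ?thesis
      using rational_singular_perp_coordinate_pair[OF K s1(1-5) s2(1-5)] by auto
  qed
qed

lemma totally_singular_span_insert:
  assumes R: "vec.subspace R" "totally_singular R" and s: "qform s = 0" "s \<in> perp R"
  shows "totally_singular (vec.span (insert s R))"
  unfolding totally_singular_def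
proof
  fix x assume "x \<in> vec.span (insert s R)"
  then obtain \<rho> k where "\<rho> \<in> R" "x = \<rho> + k *s s"
    using span_insert_subspace_elem[OF R(1)] by blast
  then show "qform x = 0"
    using R(2) s by (auto simp: totally_singular_def perp_def qform_add qform_scale polar_scale_right)
qed

lemma perp_insert_singular_elem:
  assumes R: "vec.subspace R" "totally_singular R" "vec.dim R = 2"
    and s: "qform s = 0" "s \<in> perp R" "s \<notin> R" and x: "x \<in> perp (insert s R)"
  obtains \<rho> k where "\<rho> \<in> R" "x = \<rho> + k *s s"
proof -
  define U where "U = vec.span (insert s R)"
  have "vec.subspace U" "totally_singular U" "vec.dim U = 3"
    using totally_singular_span_insert[OF R(1,2) s(1,2)] vec.dim_insert[of s R] s(3) R(3)
      vec.span_eq_iff[THEN iffD2, OF R(1)]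
    by (simp_all add: U_def)
  moreover have "x \<in> perp U"
    using x by (simp add: U_def perp_span)
  ultimately have "x \<in> U"
    by (rule totally_singular_3_maximal)
  then show ?thesis
    using span_insert_subspace_elem[OF R(1)] that unfolding U_def by blast
qed

text \<open>A totally singular line \<open>R\<close> lies in exactly two generators; below, \<open>s\<close> spans one of them
  with \<open>R\<close>, and \<open>Y\<close> is a generator through \<open>R\<close> different from \<open>R + \<langle>s\<rangle>\<close>.\<close>

lemma polar_other_generator_nonzero:
  assumes R: "vec.subspace R" "totally_singular R" "vec.dim R = 2"
    and s: "qform s = 0" "s \<in> perp R" "s \<notin> R"
    and Y: "vec.subspace Y" "totally_singular Y" "R \<subseteq> Y" "s \<notin> Y"
    and y: "y \<in> Y" "y \<notin> R"
  shows "polar s y \<noteq> 0"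
proof
  assume "polar s y = 0"
  moreover have "y \<in> perp R"
    using y(1) Y(3) totally_singular_polar[OF Y(1,2)] by (auto simp: perp_def)
  ultimately have "y \<in> perp (insert s R)"
    by (simp add: perp_def)
  then obtain \<rho> k where \<rho>: "\<rho> \<in> R" "y = \<rho> + k *s s"
    using perp_insert_singular_elem[OF R s] by blast
  then have "k \<noteq> 0"
    using y(2) by auto
  moreover have "k *s s \<in> Y"
    using \<rho> y(1) Y(3) vec.subspace_diff[OF Y(1), of y \<rho>] by auto
  ultimately show False
    using Y(4) subspace_scale_iff[OF Y(1)] by blast
qed

lemma other_generator_mem:
  assumes R: "vec.subspace R" "totally_singular R" "vec.dim R = 2"
    and s: "qform s = 0" "s \<in> perp R" "s \<notin> R"
    and Y: "vec.subspace Y" "totally_singular Y" "vec.dim Y = 3" "R \<subseteq> Y" "s \<notin> Y"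
    and t: "qform t = 0" "t \<in> perp R" "polar s t = 1"
  shows "t \<in> Y"
proof -
  obtain y where y: "y \<in> Y" "y \<notin> R"
    using R(3) Y(3,4) vec.dim_subset[of Y R] by fastforce
  have y_R: "y \<in> perp R"
    using y(1) Y(4) totally_singular_polar[OF Y(1,2)] by (auto simp: perp_def)
  have s_s: "polar s s = 0"
    using polar_self[of s] s(1) by simp
  define \<alpha> \<beta> where "\<alpha> = polar y t" and "\<beta> = polar y s"
  define z where "z = y - \<alpha> *s s - \<beta> *s t"
  have "z \<in> perp (insert s R)"
    using y_R s(2) t(2,3) s_s
    by (auto simp: z_def \<alpha>_def \<beta>_def perp_def polar_diff_right polar_scale_right polar_sym)
  then obtain \<rho> k where \<rho>: "\<rho> \<in> R" "z = \<rho> + k *s s"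
    using perp_insert_singular_elem[OF R s] by blast
  have "polar t z = 0"
    using t(1,3) polar_self[of t] by (simp add: z_def \<alpha>_def polar_diff_right polar_scale_right polar_sym)
  moreover have "polar t \<rho> = 0"
    using \<rho>(1) t(2) by (auto simp: perp_def polar_sym)
  ultimately have "k = 0"
    using \<rho>(2) t(3) by (simp add: polar_add_right polar_scale_right polar_sym)
  then have z_R: "z \<in> R"
    using \<rho> by simp
  txt \<open>Since \<open>q(y) = \<alpha>\<beta>\<close> and \<open>\<beta> \<noteq> 0\<close>, \<open>y - z\<close> is a nonzero multiple of \<open>t\<close>.\<close>
  have "qform y = \<alpha> * \<beta>"
  proof -
    have "y = z + (\<alpha> *s s + \<beta> *s t)"
      by (simp add: z_def)
    moreover have "polar z (\<alpha> *s s + \<beta> *s t) = 0"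
      using z_R s(2) t(2) by (simp add: perp_def polar_add_right polar_scale_right)
    moreover have "qform z = 0"
      using z_R R(2) by (simp add: totally_singular_def)
    ultimately show ?thesis
      using s(1) t by (simp add: qform_add qform_scale polar_scale_left polar_scale_right)
  qed
  moreover have "qform y = 0"
    using y(1) Y(2) by (auto simp: totally_singular_def)
  moreover have "\<beta> \<noteq> 0"
    using polar_other_generator_nonzero[OF R s Y(1,2,4,5) y] by (simp add: \<beta>_def polar_sym)
  ultimately have "\<beta> *s t = y - z"
    by (simp add: z_def)
  moreover have "y - z \<in> Y"
    using y(1) z_R Y(4) vec.subspace_diff[OF Y(1)] by blast
  ultimately show ?thesis
    using \<open>\<beta> \<noteq> 0\<close> subspace_scale_iff[OF Y(1)] by metis
qed

lemma rational_generator_third_vector: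
  assumes K: "is_subfield K" and Y: "vec.subspace Y" "totally_singular Y" "vec.dim Y = 3"
    and r: "r1 \<in> coords_in K" "r2 \<in> coords_in K" "r1 \<in> Y" "r2 \<in> Y" "r1 \<noteq> 0" "r2 \<notin> vec.span {r1}"
  shows "\<exists>r3\<in>coords_in K. r3 \<in> Y \<and> r3 \<notin> vec.span {r1, r2}"
proof -
  define R where "R = vec.span {r1, r2}"
  have R_Y: "R \<subseteq> Y"
    unfolding R_def using r(3,4) Y(1) by (intro vec.span_minimal) auto
  have R: "vec.subspace R" "totally_singular R" "vec.dim R = 2"
    using independent_pair[OF r(5,6)] R_Y Y(2) by (auto simp: R_def totally_singular_def)
  have perp_R: "perp R = perp {r1, r2}"
    by (simp add: R_def perp_span)
  obtain s where s: "s \<in> coords_in K" "qform s = 0" "s \<in> perp R" "s \<notin> R"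
    using rational_singular_perp[OF K r(1,2)] perp_R by (auto simp: R_def)
  show ?thesis
  proof (cases "s \<in> Y")
    case True
    then show ?thesis
      using s by (auto simp: R_def)
  next
    case False
    txt \<open>Then \<open>Y\<close> is the other generator through \<open>R\<close>; it contains a rational singular \<open>t'\<close>
      with \<open>t' \<perp> R\<close> and \<open>polar s t' = 1\<close>, found by solving a rational linear system.\<close>
    obtain y where y: "y \<in> Y" "y \<notin> R"
      using R(3) Y(3) R_Y vec.dim_subset[of Y R] by fastforce
    then have "polar s y \<noteq> 0" "y \<in> perp R"
      using polar_other_generator_nonzero[OF R s(2-4) Y(1,2) R_Y False] R_Y
        totally_singular_polar[OF Y(1,2)] by (auto simp: perp_def)
    moreover have "s \<noteq> r1" "s \<noteq> r2"
      using s(4) by (auto simp: R_def vec.span_base)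
    ultimately obtain t where t: "t \<in> coords_in K" "t \<in> perp R" "polar s t = 1"
      using rational_polar_solution[OF K, of "{r1, r2, s}" "\<lambda>r. if r = s then 1 else 0"
          "(1 / polar s y) *s y"] r(1,2) s(1) K perp_R
      by (auto simp: polar_scale_right perp_def subfield_zero subfield_one)
    define t' where "t' = t - qform t *s s"
    have "polar s s = 0"
      using polar_self[of s] s(2) by simp
    then have t': "t' \<in> coords_in K" "t' \<in> perp R" "polar s t' = 1" "qform t' = 0"
      using t s K
      by (auto simp: t'_def perp_def coords_in_diff coords_in_scale qform_in_subfield polar_diff_right
          polar_scale_right qform_diff qform_scale polar_sym[of t s])
    then have "t' \<in> Y"
      using other_generator_mem[OF R s(2-4) Y(1,2,3) R_Y False] by blast
    moreover have "t' \<notin> R"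
      using t'(3) s(3) by (auto simp: perp_def polar_sym)
    ultimately show ?thesis
      using t'(1) by (auto simp: R_def)
  qed
qed

definition rational_generator :: "'a::field set \<Rightarrow> 'a vec6 set \<Rightarrow> bool" where
  "rational_generator K Y \<longleftrightarrow> vec.subspace Y \<and> totally_singular Y \<and> vec.dim Y = 3 \<and>
     (\<exists>u v. u \<in> Y \<inter> coords_in K \<and> v \<in> Y \<inter> coords_in K \<and> u \<noteq> 0 \<and> v \<notin> vec.span {u})"

lemma rational_generator_spanned:
  assumes K: "is_subfield K" and W: "rational_generator K W"
  shows "\<exists>A. finite A \<and> A \<subseteq> coords_in K \<and> vec.span A = W"
proof -
  obtain u v where uv: "u \<in> W" "v \<in> W" "u \<in> coords_in K" "v \<in> coords_in K" "u \<noteq> 0" "v \<notin> vec.span {u}"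
    and W': "vec.subspace W" "totally_singular W" "vec.dim W = 3"
    using W unfolding rational_generator_def by blast
  obtain c where c: "c \<in> coords_in K" "c \<in> W" "c \<notin> vec.span {u, v}"
    using rational_generator_third_vector[OF K W' uv(3,4,1,2,5,6)] by blast
  have "vec.dim (vec.span (insert c {u, v})) = 3"
    using vec.dim_insert[of c "{u, v}"] c(3) independent_pair[OF uv(5,6)] by simp
  moreover have "vec.span (insert c {u, v}) \<subseteq> W"
    using uv c W' by (intro vec.span_minimal) auto
  ultimately have "vec.span {c, u, v} = W"
    using vec.subspace_dim_equal[OF vec.subspace_span W'(1)] W'(3) by simp
  then show ?thesis
    using uv c by (intro exI[of _ "{c, u, v}"]) simp
qed

lemma rational_generator_perp_vector:
  assumes K: "is_subfield K" and W: "rational_generator K W" and r: "r \<in> coords_in K"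
  shows "\<exists>s\<in>W \<inter> coords_in K. s \<noteq> 0 \<and> polar r s = 0"
proof -
  obtain u v where uv: "u \<in> W" "v \<in> W" "u \<in> coords_in K" "v \<in> coords_in K" "u \<noteq> 0" "v \<notin> vec.span {u}"
    and W': "vec.subspace W"
    using W unfolding rational_generator_def by blast
  show ?thesis
  proof (cases "polar r u = 0")
    case True
    then show ?thesis
      using uv by blast
  next
    case False
    define s where "s = polar r v *s u - polar r u *s v"
    have "s \<in> W"
      using W' uv(1,2) by (simp add: s_def vec.subspace_diff vec.subspace_scale)
    moreover have "s \<in> coords_in K"
      using uv(3,4) r K by (simp add: s_def coords_in_diff coords_in_scale polar_in_subfield)
    moreover have "s \<noteq> 0"
    proof
      assume "s = 0"
      then have "v = (polar r v / polar r u) *s u"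
        using False by (simp add: s_def vec_eq_iff field_simps)
      then show False
        using uv(6) by (metis vec.span_base vec.span_scale singletonI)
    qed
    moreover have "polar r s = 0"
      by (simp add: s_def polar_diff_right polar_scale_right mult.commute)
    ultimately show ?thesis
      by blast
  qed
qed

lemma rational_generator_of_rational_vector:
  assumes K: "is_subfield K" and Y: "vec.subspace Y" "totally_singular Y" "vec.dim Y = 3"
    and Z: "vec.subspace Z" "vec.dim Z = 2" "Z \<subseteq> Y"
    and W: "rational_generator K W" "Z \<subseteq> W" "W \<noteq> Y"
    and r: "r \<in> Y" "r \<in> coords_in K" "r \<notin> Z"
  shows "rational_generator K Y"
proof -
  have W': "vec.subspace W" "totally_singular W" "vec.dim W = 3"
    using W(1) unfolding rational_generator_def by blast+
  have "W \<inter> Y = Z"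
    by (rule inter_eq_of_dim) (use W' Y Z W in auto)
  then have r_W: "r \<notin> W"
    using r by blast
  obtain s where s: "s \<in> W" "s \<in> coords_in K" "s \<noteq> 0" "polar r s = 0"
    using rational_generator_perp_vector[OF K W(1) r(2)] by blast
  have "s \<in> Z"
  proof (rule ccontr)
    assume "s \<notin> Z"
    then have "W = vec.span (insert s Z)"
      using span_insert_eq_of_dim[OF W'(1) Z(1) W(2) s(1)] W'(3) Z(2) by simp
    moreover have "r \<in> perp Z"
      using r(1) Z(3) totally_singular_polar[OF Y(1,2)] by (auto simp: perp_def)
    ultimately have "r \<in> perp W"
      using perp_of_span_insert[OF Z(1)] s(4) polar_sym by metis
    then show False
      using totally_singular_3_maximal[OF W'] r_W by blast
  qed
  moreover have "r \<noteq> 0"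
    using r(3) vec.subspace_0[OF Z(1)] by auto
  moreover have "s \<notin> vec.span {r}"
    using \<open>s \<in> Z\<close> r(3) s(3) subspace_scale_iff[OF Z(1)] by (auto simp: vec.span_singleton)
  ultimately show ?thesis
    using Y r s(2) Z(3) unfolding rational_generator_def by blast
qed

lemma rational_vector_of_two_generators:
  assumes K: "is_subfield K" and Y: "vec.subspace Y" "totally_singular Y" "vec.dim Y = 3"
    and Z1: "vec.subspace Z1" "vec.dim Z1 = 2" "Z1 \<subseteq> Y"
    and Z2: "vec.subspace Z2" "vec.dim Z2 = 2" "Z2 \<subseteq> Y" and "Z1 \<noteq> Z2"
    and W1: "rational_generator K W1" "Z1 \<subseteq> W1" "W1 \<noteq> Y"
    and W2: "rational_generator K W2" "Z2 \<subseteq> W2" "W2 \<noteq> Y"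
    and x0: "x0 \<in> Z1 \<inter> Z2" "x0 \<noteq> 0"
  shows "\<exists>w\<in>coords_in K. w \<noteq> 0 \<and> w \<in> Z1 \<inter> Z2"
proof -
  have W1': "vec.subspace W1" "totally_singular W1" "vec.dim W1 = 3"
    and W2': "vec.subspace W2" "totally_singular W2" "vec.dim W2 = 3"
    using W1(1) W2(1) unfolding rational_generator_def by blast+
  have W1_Y: "W1 \<inter> Y = Z1" and W2_Y: "W2 \<inter> Y = Z2"
    by (rule inter_eq_of_dim; use W1' W2' Y Z1 Z2 W1 W2 in auto)+
  obtain A1 A2 where A: "finite A1" "A1 \<subseteq> coords_in K" "vec.span A1 = W1"
    "finite A2" "A2 \<subseteq> coords_in K" "vec.span A2 = W2"
    using rational_generator_spanned[OF K] W1(1) W2(1) by metis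
  obtain w where w: "w \<in> coords_in K" "w \<noteq> 0" "w \<in> W1" "w \<in> W2"
    using rational_vector_in_span_inter[OF K A(1,4,2,5) x0(2)] x0(1) W1(2) W2(2) A(3,6) by blast
  txt \<open>\<open>w\<close> is orthogonal to \<open>Z1\<close> inside \<open>W1\<close> and to \<open>Z2\<close> inside \<open>W2\<close>, hence to all of \<open>Y\<close>.\<close>
  obtain z2 where z2: "z2 \<in> Z2" "z2 \<notin> Z1"
    using vec.subspace_dim_equal[OF Z2(1) Z1(1)] Z1(2) Z2(2) \<open>Z1 \<noteq> Z2\<close> by auto
  have "Y = vec.span (insert z2 Z1)"
    using span_insert_eq_of_dim[OF Y(1) Z1(1,3)] z2 Z2(3) Y(3) Z1(2) by auto
  moreover have "w \<in> perp Z1" "polar z2 w = 0"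
    using w z2(1) W1(2) W2(2) totally_singular_polar[OF W1'(1,2)] totally_singular_polar[OF W2'(1,2)]
    by (auto simp: perp_def)
  ultimately have "w \<in> perp Y"
    using perp_of_span_insert[OF Z1(1)] by blast
  then have "w \<in> Y"
    using totally_singular_3_maximal[OF Y] by blast
  then show ?thesis
    using w W1_Y W2_Y by blast
qed

section \<open>The subspace of quasi-rational points\<close>

definition quasi_rational_points :: "'a::field set \<Rightarrow> 'a vec6 set set" where
  "quasi_rational_points K = {Z \<in> grass_points.
     (\<exists>v\<in>Z. v \<in> coords_in K \<and> v \<noteq> 0) \<or> (\<exists>Y. rational_generator K Y \<and> Z \<subseteq> Y)}"

lemma rational_generator_of_quasi_rational_point:
  assumes K: "is_subfield K" and Y: "vec.subspace Y" "totally_singular Y" "vec.dim Y = 3"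
    and Z: "Z \<in> quasi_rational_points K" "Z \<subseteq> Y" and r: "r \<in> Y" "r \<in> coords_in K" "r \<notin> Z"
  shows "rational_generator K Y"
proof -
  have Z': "vec.subspace Z" "vec.dim Z = 2"
    using Z(1) by (auto simp: quasi_rational_points_def grass_points_iff)
  consider (rational) r' where "r' \<in> Z" "r' \<in> coords_in K" "r' \<noteq> 0"
    | (generator) W where "rational_generator K W" "Z \<subseteq> W"
    using Z(1) unfolding quasi_rational_points_def by blast
  then show ?thesis
  proof cases
    case rational
    have "r \<noteq> 0"
      using r(3) vec.subspace_0[OF Z'(1)] by auto
    moreover have "r' \<notin> vec.span {r}"
      using rational r(3) subspace_scale_iff[OF Z'(1)] by (auto simp: vec.span_singleton)
    ultimately show ?thesis
      using Y r rational Z(2) unfolding rational_generator_def by blast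
  next
    case generator
    then show ?thesis
      using rational_generator_of_rational_vector[OF K Y Z' Z(2) generator _ r] by blast
  qed
qed

lemma quasi_rational_line_closed:
  assumes K: "is_subfield K" and X: "vec.subspace X" "vec.dim X = 1"
    and Y: "vec.subspace Y" "totally_singular Y" "vec.dim Y = 3"
    and Z1: "Z1 \<in> quasi_rational_points K" "X \<subseteq> Z1" "Z1 \<subseteq> Y"
    and Z2: "Z2 \<in> quasi_rational_points K" "X \<subseteq> Z2" "Z2 \<subseteq> Y" and "Z1 \<noteq> Z2"
    and Z: "Z \<in> grass_points" "X \<subseteq> Z" "Z \<subseteq> Y"
  shows "Z \<in> quasi_rational_points K"
proof (rule ccontr)
  assume "Z \<notin> quasi_rational_points K"
  then have X_irr: "\<not> (\<exists>v\<in>X. v \<in> coords_in K \<and> v \<noteq> 0)" and Y_irr: "\<not> rational_generator K Y"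
    using Z unfolding quasi_rational_points_def by blast+
  have pts: "vec.subspace Zi" "vec.dim Zi = 2" if "Zi \<in> quasi_rational_points K" for Zi
    using that by (auto simp: quasi_rational_points_def grass_points_iff)
  have X_eq: "Z1 \<inter> Z2 = X"
    by (rule inter_eq_of_dim) (use X pts Z1 Z2 \<open>Z1 \<noteq> Z2\<close> in auto)
  txt \<open>A rational vector of one point lies outside the other, which would make \<open>Y\<close> rational.\<close>
  have "\<not> (\<exists>r\<in>Z1. r \<in> coords_in K \<and> r \<noteq> 0)" "\<not> (\<exists>r\<in>Z2. r \<in> coords_in K \<and> r \<noteq> 0)"
    using rational_generator_of_quasi_rational_point[OF K Y Z2(1,3)]
      rational_generator_of_quasi_rational_point[OF K Y Z1(1,3)] Z1(3) Z2(3) X_eq X_irr Y_irr by blast+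
  then obtain W1 W2 where "rational_generator K W1" "Z1 \<subseteq> W1" "rational_generator K W2" "Z2 \<subseteq> W2"
    using Z1(1) Z2(1) by (auto simp: quasi_rational_points_def)
  moreover obtain x0 where "x0 \<in> X" "x0 \<noteq> 0"
    using X(2) vec.dim_eq_0[of X] by auto
  ultimately show False
    using rational_vector_of_two_generators[OF K Y pts[OF Z1(1)] Z1(3) pts[OF Z2(1)] Z2(3) \<open>Z1 \<noteq> Z2\<close>]
      Y_irr X_irr X_eq by blast
qed

lemma geom_subspace_quasi_rational_points:
  assumes K: "is_subfield K"
  shows "geom_subspace (quasi_rational_points K)"
  unfolding geom_subspace_def
proof (intro conjI ballI impI)
  show "quasi_rational_points K \<subseteq> grass_points"
    by (auto simp: quasi_rational_points_def)
  fix l assume "l \<in> grass_lines"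
    and "\<exists>x y. x \<noteq> y \<and> x \<in> l \<inter> quasi_rational_points K \<and> y \<in> l \<inter> quasi_rational_points K"
  moreover obtain X Y where "l = {Z \<in> grass_points. X \<subseteq> Z \<and> Z \<subseteq> Y}"
    and X: "vec.subspace X" "vec.dim X = 1" and Y: "vec.subspace Y" "totally_singular Y" "vec.dim Y = 3"
    using \<open>l \<in> grass_lines\<close> unfolding grass_lines_def ts_subspaces_UNIV_iff by blast
  ultimately show "l \<subseteq> quasi_rational_points K"
    using quasi_rational_line_closed[OF K X Y] by blast
qed

section \<open>A point that is not quasi-rational\<close>

definition witness_vec1 :: "'a::field \<Rightarrow> 'a vec6" where
  "witness_vec1 \<alpha> = (\<chi> i. if i = 0 then 1 else if i = 2 then \<alpha> else 0)"

definition witness_vec2 :: "'a::field \<Rightarrow> 'a vec6" where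
  "witness_vec2 \<alpha> = (\<chi> i. if i = 1 then \<alpha> else if i = 3 then -1 else if i = 4 then 1 else 0)"

definition witness_line :: "'a::field \<Rightarrow> 'a vec6 set" where
  "witness_line \<alpha> = vec.span {witness_vec1 \<alpha>, witness_vec2 \<alpha>}"

lemma witness_vec_nth [simp]:
  "witness_vec1 \<alpha> $ 0 = 1" "witness_vec1 \<alpha> $ 1 = 0" "witness_vec1 \<alpha> $ 2 = \<alpha>"
  "witness_vec1 \<alpha> $ 3 = 0" "witness_vec1 \<alpha> $ 4 = 0" "witness_vec1 \<alpha> $ 5 = 0"
  "witness_vec2 \<alpha> $ 0 = 0" "witness_vec2 \<alpha> $ 1 = \<alpha>" "witness_vec2 \<alpha> $ 2 = 0"
  "witness_vec2 \<alpha> $ 3 = -1" "witness_vec2 \<alpha> $ 4 = 1" "witness_vec2 \<alpha> $ 5 = 0"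
  by (simp_all add: witness_vec1_def witness_vec2_def)

lemma witness_line_elem:
  assumes "x \<in> witness_line \<alpha>"
  obtains a b where "x$0 = a" "x$1 = b * \<alpha>" "x$2 = a * \<alpha>" "x$3 = - b" "x$4 = b" "x$5 = 0"
proof -
  obtain a b where "x = a *s witness_vec1 \<alpha> + b *s witness_vec2 \<alpha>"
    using span_pair_elem assms unfolding witness_line_def by blast
  then show ?thesis
    using that[of a b] by (simp add: mult.commute)
qed

lemma witness_line_grass_point: "witness_line \<alpha> \<in> grass_points"
proof -
  have "witness_vec1 \<alpha> \<noteq> 0"
    using witness_vec_nth(1) by (metis zero_index zero_neq_one)
  moreover have "witness_vec2 \<alpha> \<notin> vec.span {witness_vec1 \<alpha>}"
  proof
    assume "witness_vec2 \<alpha> \<in> vec.span {witness_vec1 \<alpha>}"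
    then obtain k where "witness_vec2 \<alpha> = k *s witness_vec1 \<alpha>"
      by (auto simp: vec.span_singleton)
    then have "witness_vec2 \<alpha> $ 4 = k * witness_vec1 \<alpha> $ 4"
      by simp
    then show False
      by simp
  qed
  moreover have "totally_singular (witness_line \<alpha>)"
    unfolding totally_singular_def
  proof
    fix x assume "x \<in> witness_line \<alpha>"
    then obtain a b where "x$0 = a" "x$1 = b * \<alpha>" "x$2 = a * \<alpha>" "x$3 = - b" "x$4 = b" "x$5 = 0"
      by (rule witness_line_elem)
    then show "qform x = 0"
      by (simp add: qform_def)
  qed
  ultimately show ?thesis
    using independent_pair by (simp add: grass_points_iff witness_line_def)
qed

lemma witness_line_no_rational_vector:
  assumes K: "is_subfield K" and "\<alpha> \<notin> K" and v: "v \<in> witness_line \<alpha>" "v \<in> coords_in K"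
  shows "v = 0"
proof -
  obtain a b where ab: "v$0 = a" "v$1 = b * \<alpha>" "v$2 = a * \<alpha>" "v$3 = - b" "v$4 = b" "v$5 = 0"
    using witness_line_elem[OF v(1)] .
  have "v$i \<in> K" for i
    using v(2) by (simp add: coords_in_def)
  then have "v$2 / v$0 \<in> K" "v$1 / v$4 \<in> K"
    using subfield_divide[OF K] by blast+
  then have "a = 0" "b = 0"
    using ab \<open>\<alpha> \<notin> K\<close> by (auto split: if_splits)
  then show ?thesis
    using ab by (simp add: vec6_eq_iff)
qed

lemma rational_perp_witness_line:
  assumes K: "is_subfield K" and "\<alpha> \<notin> K" and w: "w \<in> coords_in K" "w \<in> perp (witness_line \<alpha>)"
  shows "w$0 = 0" "w$1 = 0" "w$3 = 0" "w$5 = w$2"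
proof -
  have wK: "w$i \<in> K" for i
    using w(1) by (simp add: coords_in_def)
  have "witness_vec1 \<alpha> \<in> witness_line \<alpha>" "witness_vec2 \<alpha> \<in> witness_line \<alpha>"
    by (simp_all add: witness_line_def vec.span_base)
  then have "polar (witness_vec1 \<alpha>) w = 0" "polar (witness_vec2 \<alpha>) w = 0"
    using w(2) by (auto simp: perp_def)
  then have e: "w$1 + \<alpha> * w$3 = 0" "\<alpha> * w$0 - w$2 + w$5 = 0"
    by (simp_all add: polar_def algebra_simps)
  have "w$3 = 0"
  proof (rule ccontr)
    assume "w$3 \<noteq> 0"
    then have "\<alpha> = - w$1 / w$3"
      using e(1) by (simp add: field_simps add_eq_0_iff)
    then show False
      using wK K \<open>\<alpha> \<notin> K\<close> by (simp add: subfield_divide subfield_uminus)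
  qed
  moreover have "w$0 = 0"
  proof (rule ccontr)
    assume "w$0 \<noteq> 0"
    then have "\<alpha> = (w$2 - w$5) / w$0"
      using e(2) by (simp add: field_simps)
    then show False
      using wK K \<open>\<alpha> \<notin> K\<close> by (simp add: subfield_divide subfield_diff)
  qed
  ultimately show "w$0 = 0" "w$1 = 0" "w$3 = 0" "w$5 = w$2"
    using e by simp_all
qed

lemma witness_line_not_in_rational_generator:
  assumes K: "is_subfield K" and "\<alpha> \<notin> K" and Y: "witness_line \<alpha> \<subseteq> Y"
  shows "\<not> rational_generator K Y"
proof
  assume "rational_generator K Y"
  then obtain u v where uv: "u \<in> Y" "v \<in> Y" "u \<in> coords_in K" "v \<in> coords_in K" "u \<noteq> 0" "v \<notin> vec.span {u}"
    and Y': "vec.subspace Y" "totally_singular Y"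
    unfolding rational_generator_def by blast
  have "w \<in> perp (witness_line \<alpha>)" if "w \<in> Y" for w
    using that Y totally_singular_polar[OF Y'] by (auto simp: perp_def polar_sym[of _ w])
  then have u: "u$0 = 0" "u$1 = 0" "u$3 = 0" "u$5 = u$2" and v: "v$0 = 0" "v$1 = 0" "v$3 = 0" "v$5 = v$2"
    using rational_perp_witness_line[OF K \<open>\<alpha> \<notin> K\<close> uv(3)] rational_perp_witness_line[OF K \<open>\<alpha> \<notin> K\<close> uv(4)]
      uv(1,2) by simp_all
  txt \<open>Both lie in the plane \<open>x0 = x1 = x3 = 0, x5 = x2\<close>, whose singular vectors form two lines
    that are not orthogonal; so \<open>u\<close> and \<open>v\<close> are proportional.\<close>
  have "qform u = 0" "qform v = 0" "polar u v = 0"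
    using uv Y' totally_singular_polar[OF Y'] by (auto simp: totally_singular_def)
  then have e: "u$4 * u$2 = 0" "v$4 * v$2 = 0" "u$4 * v$2 + u$2 * v$4 = 0"
    using u v by (simp_all add: qform_def polar_def algebra_simps)
  have "u$2 \<noteq> 0 \<or> u$4 \<noteq> 0"
    using uv(5) u by (auto simp: vec6_eq_iff)
  then have "v = (v$2 / u$2) *s u \<or> v = (v$4 / u$4) *s u"
    using e u v by (auto simp: vec6_eq_iff)
  then have "v \<in> vec.span {u}"
    by (auto simp: vec.span_singleton)
  then show False
    using uv(6) by contradiction
qed

lemma kspan_rational_line_has_rational_vector:
  assumes "L \<in> ts_subspaces K 2"
  shows "\<exists>v\<in>kspan UNIV L. v \<in> coords_in K \<and> v \<noteq> 0"
proof -
  obtain B where B: "is_ksubspace K L" "card B = 2" "kspan K B = L"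
    using assms unfolding ts_subspaces_def kdim_subspace_def by blast
  obtain b where b: "b \<in> B" "b \<noteq> 0"
    using B(2) by (metis card_2_iff insertI1 insert_commute)
  have "B \<subseteq> L"
    using B(3) unfolding kspan_def by blast
  moreover have "L \<subseteq> coords_in K"
    using B(1) unfolding is_ksubspace_def by blast
  moreover have "L \<subseteq> kspan UNIV L"
    unfolding kspan_def by blast
  ultimately show ?thesis
    using b by blast
qed

lemma geom_span_least: "geom_subspace P \<Longrightarrow> S \<subseteq> P \<Longrightarrow> geom_span S \<subseteq> P"
  by (auto simp: geom_span_def)

lemma geom_span_non_points: "\<not> S \<subseteq> grass_points \<Longrightarrow> geom_span S = UNIV"
  by (auto simp: geom_span_def geom_subspace_def)

theorem mainTheorem5:
  fixes F0 :: "'a::field set"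
  assumes "is_subfield F0" and "F0 \<noteq> UNIV"
  shows "\<not> subfield_generated F0"
proof
  assume "subfield_generated F0"
  then have span: "geom_span ((\<lambda>L. kspan UNIV L) ` ts_subspaces F0 2) = grass_points"
    (is "geom_span ?S = _") unfolding subfield_generated_def .
  obtain \<alpha> where "\<alpha> \<notin> F0"
    using assms(2) by blast
  then have witness: "witness_line \<alpha> \<in> grass_points - quasi_rational_points F0"
    using witness_line_grass_point witness_line_no_rational_vector[OF assms(1)]
      witness_line_not_in_rational_generator[OF assms(1)] by (auto simp: quasi_rational_points_def)
  show False
  proof (cases "?S \<subseteq> grass_points")
    case True
    then have "?S \<subseteq> quasi_rational_points F0"
      using kspan_rational_line_has_rational_vector by (fastforce simp: quasi_rational_points_def)
    then show False
      using geom_span_least[OF geom_subspace_quasi_rational_points[OF assms(1)]] span witness by blast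
  next
    case False
    txt \<open>No subspace contains a non-point, so the span degenerates to \<open>UNIV\<close>.\<close>
    moreover have "{} \<notin> grass_points"
      using vec.subspace_0 by (auto simp: grass_points_iff)
    ultimately show False
      using geom_span_non_points span by blast
  qed
qed

end
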